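(* Let $G$ be a modification order graph (mo-graph) and let $C_0 \xrightarrow{mo} C_1 \xrightarrow{mo} \cdots \xrightarrow{mo} C_n$ be a path in $G$ such that $CV_{C_0} \le CV_{C_1} \le \cdots \le CV_{C_n}$. If any new edge is added to $G$ using the procedures Merge, AddEdge and AddRMWEdge, then the updated clock vectors satisfy $CV'_{C_0} \le CV'_{C_1} \le \cdots \le CV'_{C_n}$, where $CV'_{C_i} := CV_{C_i}$ whenever $CV_{C_i}$ is not changed by the addition.
   Context: An execution is a sequence of events performed by threads. Each event $E$ has a thread id $t_E$ and a unique sequence number $s_E$ taken from a global counter that is incremented by one at every event, so sequence numbers strictly increase along the execution. A clock vector is a function from thread ids to natural numbers, with $(CV_1 \cup CV_2)(t) = \max(CV_1(t), CV_2(t))$ and $CV_1 \le CV_2$ iff $CV_1(t) \le CV_2(t)$ for all $t$. The mo-graph has one node for each atomic store or atomic read-modify-write (RMW) executed so far. Edges only connect nodes accessing the same memory location. Each node $X$ stores a thread id $X.tid$, a set $X.edges$ of successor nodes (its outgoing mo edges), a field $X.rmw$ (a node or null; an rmw edge from $X$ to $X.rmw$ indicates that RMW $X.rmw$ reads from $X$), and a clock vector $X.cv$, also written $CV_X$. When the node for a store $A$ is created, its clock vector is $\perp_{CV_A} = \lambda t.\ (s_A \text{ if } t = t_A \text{ else } 0)$. Edges are added only by the following procedures. Merge(dst, src): if $src.cv \le dst.cv$ return false; otherwise set $dst.cv := dst.cv \cup src.cv$ and return true. AddEdge(from, to): let mustAdd be true iff ($from.rmw = to$ or $from.tid = to.tid$).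 If $from.cv \le to.cv$ and not mustAdd, return. While $from.rmw \ne$ null: let $next := from.rmw$; if $next = to$ stop the loop; otherwise $from := next$. Add $to$ to $from.edges$. If Merge(to, from) returns true, then let $Q := \{to\}$ and while $Q$ is nonempty remove a node $node$ from $Q$ and for each $dst \in node.edges$, if Merge(dst, node) returns true add $dst$ to $Q$. AddRMWEdge(from, rmw): set $from.rmw := rmw$; for each $dst \in from.edges$ with $dst \ne rmw$ add $dst$ to $rmw.edges$; set $from.edges := \emptyset$; call AddEdge(from, rmw). A path $X \xrightarrow{mo} Y$ means $Y \in X.edges$. *)

theory Defs
  imports Main
begin

text \<open>Clock vectors are functions 't \<Rightarrow> nat; the library order on functions is the
  pointwise order and sup is the pointwise max, exactly as in the paper.\<close>

record ('n, 't) mo_graph =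
  tid :: "'n \<Rightarrow> 't"
  edges :: "'n \<Rightarrow> 'n set"
  rmw :: "'n \<Rightarrow> 'n option"   \<comment> \<open>None = null\<close>
  cv :: "'n \<Rightarrow> 't \<Rightarrow> nat"

definition merge :: "'n \<Rightarrow> 'n \<Rightarrow> ('n, 't) mo_graph \<Rightarrow> bool \<times> ('n, 't) mo_graph" where
  "merge dst src G =
     (if cv G src \<le> cv G dst then (False, G)
      else (True, G\<lparr>cv := (cv G)(dst := sup (cv G dst) (cv G src))\<rparr>))"

text \<open>The inner loop "for each dst in node.edges: if Merge(dst,node) then add dst to Q",
  iterating over the (snapshot) set R of remaining successors in an arbitrary order.
  merge_each G node R Q G' Q' : starting from G and worklist Q, ending in G' and Q'.\<close>
inductive merge_each ::
  "('n, 't) mo_graph \<Rightarrow> 'n \<Rightarrow> 'n set \<Rightarrow> 'n set \<Rightarrow> ('n, 't) mo_graph \<Rightarrow> 'n set \<Rightarrow> bool" where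
  finish: "merge_each G node {} Q G Q"
| step: "\<lbrakk> dst \<in> R; merge dst node G = (b, G1);
           merge_each G1 node (R - {dst}) (if b then insert dst Q else Q) G2 Q2 \<rbrakk>
         \<Longrightarrow> merge_each G node R Q G2 Q2"

text \<open>The worklist loop "while Q nonempty: remove a node from Q and process it".\<close>
inductive propagate :: "('n, 't) mo_graph \<Rightarrow> 'n set \<Rightarrow> ('n, 't) mo_graph \<Rightarrow> bool" where
  empty: "propagate G {} G"
| step: "\<lbrakk> node \<in> Q; merge_each G node (edges G node) (Q - {node}) G1 Q1;
           propagate G1 Q1 G2 \<rbrakk> \<Longrightarrow> propagate G Q G2"

text \<open>The loop "while from.rmw \<noteq> null: next := from.rmw; if next = to stop; else from := next";
  follow_rmw G to x y: starting with from = x the loop ends with from = y.\<close>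
inductive follow_rmw :: "('n, 't) mo_graph \<Rightarrow> 'n \<Rightarrow> 'n \<Rightarrow> 'n \<Rightarrow> bool" where
  null: "rmw G x = None \<Longrightarrow> follow_rmw G to x x"
| hit: "rmw G x = Some to \<Longrightarrow> follow_rmw G to x x"
| advance: "\<lbrakk> rmw G x = Some nxt; nxt \<noteq> to; follow_rmw G to nxt y \<rbrakk> \<Longrightarrow> follow_rmw G to x y"

definition must_add :: "('n, 't) mo_graph \<Rightarrow> 'n \<Rightarrow> 'n \<Rightarrow> bool" where
  "must_add G fr to \<longleftrightarrow> rmw G fr = Some to \<or> tid G fr = tid G to"

inductive add_edge :: "('n, 't) mo_graph \<Rightarrow> 'n \<Rightarrow> 'n \<Rightarrow> ('n, 't) mo_graph \<Rightarrow> bool" where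
  skip: "\<lbrakk> cv G fr \<le> cv G to; \<not> must_add G fr to \<rbrakk> \<Longrightarrow> add_edge G fr to G"
| nochange: "\<lbrakk> \<not> (cv G fr \<le> cv G to \<and> \<not> must_add G fr to); follow_rmw G to fr f;
              merge to f (G\<lparr>edges := (edges G)(f := insert to (edges G f))\<rparr>) = (False, G2) \<rbrakk>
             \<Longrightarrow> add_edge G fr to G2"
| changed: "\<lbrakk> \<not> (cv G fr \<le> cv G to \<and> \<not> must_add G fr to); follow_rmw G to fr f;
              merge to f (G\<lparr>edges := (edges G)(f := insert to (edges G f))\<rparr>) = (True, G2);
              propagate G2 {to} G3 \<rbrakk>
             \<Longrightarrow> add_edge G fr to G3"

text \<open>AddRMWEdge(from, rmw). The updates are performed in the order of the paper
  (the edges of from are copied to rmw first, then from.edges is cleared).\<close>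
inductive add_rmw_edge :: "('n, 't) mo_graph \<Rightarrow> 'n \<Rightarrow> 'n \<Rightarrow> ('n, 't) mo_graph \<Rightarrow> bool" where
  "add_edge (G\<lparr>rmw := (rmw G)(fr := Some r),
               edges := ((edges G)(r := edges G r \<union> (edges G fr - {r})))(fr := {})\<rparr>) fr r G'
   \<Longrightarrow> add_rmw_edge G fr r G'"

end

theory Submission
  imports Defs
begin

text \<open>Merge only ever raises a clock vector, namely that of its target, by a join. Call an edge
  X \<rightarrow> Y ordered if CV X \<le> CV Y. During the worklist loop every ordered edge of the graph either
  stays ordered or has its source pending in the worklist: raising the target of an ordered edge
  keeps it ordered, a node whose clock is raised is enqueued, and processing a node merges it into
  all its successors, which orders its outgoing edges. AddEdge adds one edge into its target and
  raises the target's clock, then runs the loop starting from the target, so when the loop ends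
  every ordered edge is still ordered. AddRMWEdge moves the successors Y of "from" to "rmw" and then
  adds the edge from \<rightarrow> rmw; afterwards from \<le> rmw \<le> Y, so the edges from \<rightarrow> Y stay ordered
  by transitivity.\<close>

lemma edges_merge:
  "merge dst src G = (b, G') \<Longrightarrow> edges G' = edges G"
  unfolding merge_def by (auto split: if_splits)

lemma cv_merge:
  "merge dst src G = (b, G') \<Longrightarrow>
     b = (\<not> cv G src \<le> cv G dst) \<and>
     cv G' = (if b then (cv G)(dst := sup (cv G dst) (cv G src)) else cv G)"
  unfolding merge_def by (auto split: if_splits)

lemma cv_merge_mono: "merge dst src G = (b, G') \<Longrightarrow> cv G X \<le> cv G' X"
  by (auto dest!: cv_merge)

lemma edges_merge_each:
  "merge_each G node R Q G' Q' \<Longrightarrow> edges G' = edges G"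
  by (induction rule: merge_each.induct) (auto dest: edges_merge)

lemma worklist_merge_each_mono:
  "merge_each G node R Q G' Q' \<Longrightarrow> Q \<subseteq> Q'"
  by (induction rule: merge_each.induct) (auto split: if_splits)

lemma cv_merge_each_mono:
  "merge_each G node R Q G' Q' \<Longrightarrow> cv G X \<le> cv G' X"
  by (induction rule: merge_each.induct) (auto dest: cv_merge_mono intro: order_trans)

lemma cv_merge_each_source:
  "merge_each G node R Q G' Q' \<Longrightarrow> cv G' node = cv G node"
  by (induction rule: merge_each.induct) (auto dest!: cv_merge)

lemma merge_each_changed_in_worklist:
  "merge_each G node R Q G' Q' \<Longrightarrow> cv G' X \<noteq> cv G X \<Longrightarrow> X \<in> Q'"
proof (induction rule: merge_each.induct)
  case (step dst R node G b G1 Q G2 Q2)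
  show ?case
  proof (cases "cv G1 X = cv G X")
    case False
    then have "X = dst \<and> b" using cv_merge[OF step.hyps(2)] by (auto split: if_splits)
    then show ?thesis using worklist_merge_each_mono[OF step.hyps(3)] by auto
  qed (use step in auto)
qed simp

lemma merge_each_orders_successors:
  "merge_each G node R Q G' Q' \<Longrightarrow> d \<in> R \<Longrightarrow> cv G' node \<le> cv G' d"
proof (induction rule: merge_each.induct)
  case (step dst R node G b G1 Q G2 Q2)
  show ?case
  proof (cases "d = dst")
    case True
    have "cv G1 node \<le> cv G1 dst"
      using cv_merge[OF step.hyps(2)] by (auto split: if_splits)
    also have "\<dots> \<le> cv G2 dst" using cv_merge_each_mono[OF step.hyps(3)] .
    finally show ?thesis using True cv_merge_each_source[OF step.hyps(3)] by simp
  qed (use step in auto)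
qed simp

definition ordered_or_pending :: "('n \<times> 'n) set \<Rightarrow> ('n, 't) mo_graph \<Rightarrow> 'n set \<Rightarrow> bool" where
  "ordered_or_pending E G Q \<longleftrightarrow>
     (\<forall>(X, Y) \<in> E. Y \<in> edges G X \<and> (cv G X \<le> cv G Y \<or> X \<in> Q))"

lemma merge_each_ordered_or_pending:
  assumes step: "merge_each G node (edges G node) (Q - {node}) G' Q'"
    and inv: "ordered_or_pending E G Q"
  shows "ordered_or_pending E G' Q'"
  unfolding ordered_or_pending_def
proof (intro ballI, clarify)
  fix X Y assume "(X, Y) \<in> E"
  then have Y: "Y \<in> edges G X" and XY: "cv G X \<le> cv G Y \<or> X \<in> Q"
    using inv unfolding ordered_or_pending_def by auto
  have "cv G' X \<le> cv G' Y \<or> X \<in> Q'"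
  proof (cases "X = node \<or> X \<in> Q - {node} \<or> cv G' X \<noteq> cv G X")
    case True
    then show ?thesis
      using Y merge_each_orders_successors[OF step] worklist_merge_each_mono[OF step]
        merge_each_changed_in_worklist[OF step] by blast
  next
    case False
    then have "cv G' X \<le> cv G Y" using XY by auto
    then show ?thesis using cv_merge_each_mono[OF step] order_trans by blast
  qed
  then show "Y \<in> edges G' X \<and> (cv G' X \<le> cv G' Y \<or> X \<in> Q')"
    using Y edges_merge_each[OF step] by simp
qed

lemma propagate_ordered_or_pending:
  "propagate G Q G' \<Longrightarrow> ordered_or_pending E G Q \<Longrightarrow> ordered_or_pending E G' {}"
  by (induction rule: propagate.induct) (auto intro: merge_each_ordered_or_pending)

lemma propagate_orders_edge:
  assumes "propagate G {to} G'" "Y \<in> edges G X" "cv G X \<le> cv G Y \<or> X = to"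
  shows "cv G' X \<le> cv G' Y"
proof -
  have "ordered_or_pending {(X, Y)} G {to}"
    using assms(2,3) unfolding ordered_or_pending_def by simp
  then show ?thesis
    using propagate_ordered_or_pending[OF assms(1)] unfolding ordered_or_pending_def by blast
qed

lemma add_edge_cases:
  assumes "add_edge G fr to G'"
  obtains (unchanged) "cv G' = cv G"
  | (changed) f G2 where "f \<noteq> to" "follow_rmw G to fr f"
      "edges G2 = (edges G)(f := insert to (edges G f))"
      "cv G2 = (cv G)(to := sup (cv G to) (cv G f))" "propagate G2 {to} G'"
  using assms
proof (cases rule: add_edge.cases)
  case (nochange f)
  then show ?thesis using cv_merge[OF nochange(3)] unchanged by simp
next
  case (changed f G2)
  note merged = cv_merge[OF changed(3)] edges_merge[OF changed(3)]
  have "f \<noteq> to" using merged by auto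
  then show ?thesis using that(2) changed merged by simp
qed (use unchanged in simp)

lemma follow_rmw_hit:
  "follow_rmw G to fr f \<Longrightarrow> rmw G fr = Some to \<Longrightarrow> f = fr"
  by (cases rule: follow_rmw.cases) auto

lemma add_edge_preserves_ordered_edge:
  assumes "add_edge G fr to G'" "Y \<in> edges G X" "cv G X \<le> cv G Y"
  shows "cv G' X \<le> cv G' Y"
  using assms(1)
proof (cases rule: add_edge_cases)
  case unchanged
  then show ?thesis using assms(3) by simp
next
  case (changed f G2)
  have "Y \<in> edges G2 X" using changed(3) assms(2) by auto
  moreover have "cv G2 X \<le> cv G2 Y \<or> X = to"
    using changed(4) assms(3) by (auto intro: le_supI1)
  ultimately show ?thesis using propagate_orders_edge[OF changed(5)] by blast
qed

lemma add_rmw_edge_preserves_ordered_edge: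
  assumes "add_rmw_edge G fr r G'" "Y \<in> edges G X" "cv G X \<le> cv G Y"
  shows "cv G' X \<le> cv G' Y"
proof -
  define G0 where "G0 = G\<lparr>rmw := (rmw G)(fr := Some r),
    edges := ((edges G)(r := edges G r \<union> (edges G fr - {r})))(fr := {})\<rparr>"
  have add: "add_edge G0 fr r G'"
    using assms(1) unfolding G0_def by (cases rule: add_rmw_edge.cases) auto
  from add show ?thesis
  proof (cases rule: add_edge_cases)
    case unchanged
    then show ?thesis using assms(3) by (simp add: G0_def)
  next
    case (changed f G2)
    have "f = fr" using follow_rmw_hit[OF changed(2)] by (simp add: G0_def)
    then have "fr \<noteq> r"
      and edges2: "edges G2 = ((edges G)(r := edges G r \<union> (edges G fr - {r})))(fr := {r})"
      and cv2: "cv G2 = (cv G)(r := sup (cv G r) (cv G fr))"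
      using changed by (auto simp: G0_def)
    have ordered: "cv G' A \<le> cv G' B" if "B \<in> edges G2 A" "cv G2 A \<le> cv G2 B \<or> A = r" for A B
      using propagate_orders_edge[OF changed(5)] that by blast
    have fr_r: "cv G' fr \<le> cv G' r"
      using ordered[of r fr] \<open>fr \<noteq> r\<close> by (simp add: edges2 cv2)
    show ?thesis
    proof (cases "X = fr")
      case True
      have "Y = r \<or> cv G' r \<le> cv G' Y"
        using ordered[of Y r] assms(2) True \<open>fr \<noteq> r\<close> by (auto simp: edges2)
      then show ?thesis using True fr_r order_trans by blast
    next
      case False
      have "Y \<in> edges G2 X" using assms(2) False by (auto simp: edges2)
      moreover have "cv G2 X \<le> cv G2 Y \<or> X = r"
        using cv2 assms(3) by (auto intro: le_supI1)
      ultimately show ?thesis using ordered by blast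
    qed
  qed
qed

theorem lemma1:
  fixes G G' :: "('n, 't) mo_graph" and C :: "nat \<Rightarrow> 'n" and n :: nat
  assumes path: "\<forall>i<n. C (Suc i) \<in> edges G (C i)"
    and mono: "\<forall>i<n. cv G (C i) \<le> cv G (C (Suc i))"
    and upd: "(\<exists>a b. add_edge G a b G') \<or> (\<exists>a b. add_rmw_edge G a b G')"
  shows "\<forall>i<n. cv G' (C i) \<le> cv G' (C (Suc i))"
  using upd path mono
  by (blast intro: add_edge_preserves_ordered_edge add_rmw_edge_preserves_ordered_edge)

end
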